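(* Let $k\geq1$ and $d_1,\dots,d_k\geq3$ be integers, and let $T=W_{d_1}\otimes\cdots\otimes W_{d_k}$. Let $A\subseteq(\mathbb{P}^1)^k$ be a zero-dimensional scheme such that $[T]\in\langle\nu_{d_1,\dots,d_k}(A)\rangle$. Then for all integers $a_1,\dots,a_k$ with $0\leq a_i\leq d_i-1$, we have $|\mathcal{I}_A(a_1,\dots,a_k)|\subseteq|\mathcal{I}_{Z_k}(a_1,\dots,a_k)|$; that is, every divisor of multidegree $(a_1,\dots,a_k)$ on $(\mathbb{P}^1)^k$ containing $A$ also contains $Z_k$.
   Context: Identify $S^d\mathbb{C}^2$ with binary forms in a basis $\{x,y\}$ (coordinates $x_i,y_i$ on the $i$-th factor), $W_d=x^{d-1}y$. $\nu_{d_1,\dots,d_k}:(\mathbb{P}^1)^k\to\mathbb{P}(S^{d_1}\mathbb{C}^2\otimes\cdots\otimes S^{d_k}\mathbb{C}^2)$, $([v_1],\dots,[v_k])\mapsto[v_1^{d_1}\otimes\cdots\otimes v_k^{d_k}]$ is the Segre–Veronese embedding; $\langle Y\rangle$ denotes linear span of a subscheme. $|\mathcal{I}_A(a_1,\dots,a_k)|$ is the projectivization of the space of multihomogeneous forms of multidegree $(a_1,\dots,a_k)$ vanishing on $A$ (divisors in $|\mathcal{O}(a_1,\dots,a_k)|$ containing $A$). Let $o_1=[x]\in\mathbb{P}^1$, $Z_1\subseteq\mathbb{P}^1$ the degree-2 scheme supported at $o_1$ with ideal $(\partial_y^2)$, and $Z_k=Z_1\times\cdots\times Z_1$. *)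

theory Defs
  imports Complex_Main "HOL-Library.Poly_Mapping"
begin

text \<open>Multigraded Cox ring of (P^1)^k: complex polynomials in the variables
  X_i = variable 2i and Y_i = variable 2i+1 (i < k), the coordinates x_i, y_i
  on the i-th factor.\<close>

type_synonym cpoly = "(nat \<Rightarrow>\<^sub>0 nat) \<Rightarrow>\<^sub>0 complex"

definition Xv :: "nat \<Rightarrow> cpoly" where
  "Xv i = Poly_Mapping.single (Poly_Mapping.single (2*i) 1) 1"

definition Yv :: "nat \<Rightarrow> cpoly" where
  "Yv i = Poly_Mapping.single (Poly_Mapping.single (2*i+1) 1) 1"

definition const_poly :: "complex \<Rightarrow> cpoly" where
  "const_poly c = Poly_Mapping.single 0 c"

definition Sring :: "nat \<Rightarrow> cpoly set" where
  "Sring k = {F. \<forall>m\<in>Poly_Mapping.keys F. \<forall>v\<in>Poly_Mapping.keys m. v < 2*k}"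

definition mdeg :: "(nat \<Rightarrow>\<^sub>0 nat) \<Rightarrow> nat \<Rightarrow> nat" where
  "mdeg m i = Poly_Mapping.lookup m (2*i) + Poly_Mapping.lookup m (2*i+1)"

text \<open>Multihomogeneous forms of multidegree (a_1,...,a_k) (a indexed from 0).\<close>
definition homog :: "nat \<Rightarrow> (nat \<Rightarrow> nat) \<Rightarrow> cpoly \<Rightarrow> bool" where
  "homog k a F \<longleftrightarrow> F \<in> Sring k \<and> (\<forall>m\<in>Poly_Mapping.keys F. \<forall>i<k. mdeg m i = a i)"

definition hcomp :: "nat \<Rightarrow> (nat \<Rightarrow> nat) \<Rightarrow> cpoly \<Rightarrow> cpoly" where
  "hcomp k a F = Abs_poly_mapping (\<lambda>m. if (\<forall>i<k. mdeg m i = a i) then Poly_Mapping.lookup F m else 0)"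

definition mh_ideal :: "nat \<Rightarrow> cpoly set \<Rightarrow> bool" where
  "mh_ideal k I \<longleftrightarrow> I \<subseteq> Sring k \<and> 0 \<in> I \<and>
     (\<forall>F\<in>I. \<forall>G\<in>I. F + G \<in> I) \<and>
     (\<forall>F\<in>I. \<forall>G\<in>Sring k. G * F \<in> I) \<and>
     (\<forall>F\<in>I. \<forall>a. hcomp k a F \<in> I)"

text \<open>Saturation with respect to the irrelevant ideal B = (x_1,y_1)...(x_k,y_k):
  B^N is generated by the monomials of multidegree (N,...,N).\<close>
definition B_saturated :: "nat \<Rightarrow> cpoly set \<Rightarrow> bool" where
  "B_saturated k I \<longleftrightarrow>
     (\<forall>F\<in>Sring k. (\<exists>N. \<forall>m. homog k (\<lambda>_. N) (Poly_Mapping.single m 1)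
                              \<longrightarrow> Poly_Mapping.single m 1 * F \<in> I) \<longrightarrow> F \<in> I)"

text \<open>Bounded Hilbert function: there is N such that dim (S_a / I_a) \<le> N for all a,
  i.e. any N+1 forms of multidegree a are linearly dependent modulo I.\<close>
definition bounded_hilbert :: "nat \<Rightarrow> cpoly set \<Rightarrow> bool" where
  "bounded_hilbert k I \<longleftrightarrow> (\<exists>N. \<forall>a f. (\<forall>j\<le>N. homog k a (f j)) \<longrightarrow>
      (\<exists>c::nat \<Rightarrow> complex. (\<exists>j\<le>N. c j \<noteq> 0) \<and> (\<Sum>j\<le>N. const_poly (c j) * f j) \<in> I))"

text \<open>Zero-dimensional closed subschemes A of (P^1)^k, represented by their
  (unique) B-saturated multihomogeneous ideal I_A in the Cox ring; zero-dimensional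
  means the (multigraded) Hilbert function is bounded.\<close>
definition zero_dim_scheme_ideal :: "nat \<Rightarrow> cpoly set \<Rightarrow> bool" where
  "zero_dim_scheme_ideal k I \<longleftrightarrow> mh_ideal k I \<and> B_saturated k I \<and> bounded_hilbert k I"

text \<open>Basis of S^{d_1}C^2 (x) ... (x) S^{d_k}C^2: the tensors
  x^{d_1-j_1} y^{j_1} (x) ... (x) x^{d_k-j_k} y^{j_k}, indexed by j with j_i \<le> d_i.\<close>
definition idx :: "nat \<Rightarrow> (nat \<Rightarrow> nat) \<Rightarrow> (nat \<Rightarrow> nat) set" where
  "idx k d = {j. \<forall>i. (i < k \<longrightarrow> j i \<le> d i) \<and> (k \<le> i \<longrightarrow> j i = 0)}"

text \<open>Pull-back along the Segre-Veronese map nu_d of a linear form L on the tensor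
  space (given by its values L j on the basis): the form
  (v_1,...,v_k) |-> L(v_1^{d_1} (x) ... (x) v_k^{d_k}) of multidegree d, computed by
  expanding (x_i x + y_i y)^{d_i} binomially.\<close>
definition nu_pull :: "nat \<Rightarrow> (nat \<Rightarrow> nat) \<Rightarrow> ((nat \<Rightarrow> nat) \<Rightarrow> complex) \<Rightarrow> cpoly" where
  "nu_pull k d L = (\<Sum>j\<in>idx k d. const_poly (L j) *
      (\<Prod>i<k. const_poly (of_nat (d i choose j i)) * Xv i ^ (d i - j i) * Yv i ^ (j i)))"

text \<open>[tau] lies in the linear span of nu_d(A): every linear form whose pull-back
  lies in I_A (i.e. every hyperplane containing nu_d(A)) vanishes on tau.\<close>
definition in_span_nu :: "nat \<Rightarrow> (nat \<Rightarrow> nat) \<Rightarrow> cpoly set \<Rightarrow> ((nat \<Rightarrow> nat) \<Rightarrow> complex) \<Rightarrow> bool" where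
  "in_span_nu k d I tau \<longleftrightarrow>
     (\<forall>L. nu_pull k d L \<in> I \<longrightarrow> (\<Sum>j\<in>idx k d. L j * tau j) = 0)"

text \<open>T = W_{d_1} (x) ... (x) W_{d_k}, W_d = x^{d-1} y: the basis tensor with j = (1,...,1).\<close>
definition T_tensor :: "nat \<Rightarrow> (nat \<Rightarrow> nat) \<Rightarrow> complex" where
  "T_tensor k j = (if j = (\<lambda>i. if i < k then 1 else 0) then 1 else 0)"

text \<open>Ideal of Z_k = Z_1 x ... x Z_1, where Z_1 is the degree-2 scheme at [x]
  defined by y^2: the ideal generated by y_1^2, ..., y_k^2.\<close>
definition IZ :: "nat \<Rightarrow> cpoly set" where
  "IZ k = {F. \<exists>g. (\<forall>i<k. g i \<in> Sring k) \<and> F = (\<Sum>i<k. g i * Yv i ^ 2)}"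

end

theory Submission
  imports Defs "HOL-Library.FuncSet"
begin

text \<open>Up to nonzero binomial factors, the coefficients of a form of multidegree d are the
  values on the basis tensors of a linear form pulled back along the Segre-Veronese map.
  Hence a form of multidegree d in I_A has zero coefficient at the monomial
  x^(d-1) y = x_1^(d_1-1) y_1 ... x_k^(d_k-1) y_k, the coordinate dual to T.
  If F in I_A has multidegree a < d, every monomial of F in which each y_i occurs at most
  once divides x^(d-1) y; multiplying F by the complementary monomial shows that its
  coefficient vanishes.  So every monomial of F is divisible by some y_i^2, i.e. F lies
  in the ideal of Z_k.\<close>

definition xy_monom :: "nat \<Rightarrow> (nat \<Rightarrow> nat) \<Rightarrow> (nat \<Rightarrow> nat) \<Rightarrow> (nat \<Rightarrow>\<^sub>0 nat)" where
  "xy_monom k p q = (\<Sum>i<k. Poly_Mapping.single (2*i) (p i) + Poly_Mapping.single (2*i+1) (q i))"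

lemma lookup_xy_monom_x: "Poly_Mapping.lookup (xy_monom k p q) (2*i) = (if i < k then p i else 0)"
  unfolding xy_monom_def
  by (induction k) (auto simp: lookup_add lookup_single when_def less_Suc_eq)

lemma lookup_xy_monom_y: "Poly_Mapping.lookup (xy_monom k p q) (Suc (2*i)) = (if i < k then q i else 0)"
  unfolding xy_monom_def
  by (induction k) (auto simp: lookup_add lookup_single when_def less_Suc_eq)

lemma keys_xy_monom_less: "v \<in> Poly_Mapping.keys (xy_monom k p q) \<Longrightarrow> v < 2*k"
proof -
  assume v: "v \<in> Poly_Mapping.keys (xy_monom k p q)"
  have "\<exists>i. v = 2*i \<or> v = Suc (2*i)" by presburger
  then obtain i where "v = 2*i \<or> v = Suc (2*i)" ..
  then show ?thesis
    using v by (auto simp: in_keys_iff lookup_xy_monom_x lookup_xy_monom_y split: if_splits)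
qed

lemma xy_monom_eqI:
  assumes "\<forall>v\<in>Poly_Mapping.keys m. v < 2*k"
    and "\<And>i. i < k \<Longrightarrow> Poly_Mapping.lookup m (2*i) = p i"
    and "\<And>i. i < k \<Longrightarrow> Poly_Mapping.lookup m (Suc (2*i)) = q i"
  shows "m = xy_monom k p q"
proof (rule poly_mapping_eqI)
  fix v
  have "\<exists>i. v = 2*i \<or> v = Suc (2*i)" by presburger
  then obtain i where v: "v = 2*i \<or> v = Suc (2*i)" ..
  show "Poly_Mapping.lookup m v = Poly_Mapping.lookup (xy_monom k p q) v"
  proof (cases "i < k")
    case True
    with v show ?thesis
      by (elim disjE) (simp_all add: assms(2,3) lookup_xy_monom_x lookup_xy_monom_y)
  next
    case False
    with v have "\<not> v < 2*k" by auto
    then have "Poly_Mapping.lookup m v = 0"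
      using assms(1) by (auto simp: in_keys_iff)
    with v False show ?thesis
      by (auto simp: lookup_xy_monom_x lookup_xy_monom_y)
  qed
qed

lemma xy_monom_inject:
  assumes "xy_monom k p q = xy_monom k p' q'" "i < k"
  shows "p i = p' i" "q i = q' i"
  using arg_cong[OF assms(1), of "\<lambda>m. Poly_Mapping.lookup m (2*i)"]
    arg_cong[OF assms(1), of "\<lambda>m. Poly_Mapping.lookup m (Suc (2*i))"] assms(2)
  by (simp_all add: lookup_xy_monom_x lookup_xy_monom_y)

lemma single_single_power:
  "Poly_Mapping.single (Poly_Mapping.single v 1) (1::'a::comm_semiring_1) ^ n
     = Poly_Mapping.single (Poly_Mapping.single v n) 1"
  by (induction n) (simp_all add: mult_single single_add[symmetric] add.commute)

lemma prod_single:
  "finite A \<Longrightarrow> (\<Prod>i\<in>A. Poly_Mapping.single (f i) (c i :: 'a::comm_semiring_1))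
     = Poly_Mapping.single (\<Sum>i\<in>A. f i) (\<Prod>i\<in>A. c i)"
  by (induction A rule: finite_induct) (simp_all add: mult_single)

lemma const_poly_mult_single: "const_poly c * Poly_Mapping.single m b = Poly_Mapping.single m (c*b)"
  by (simp add: const_poly_def mult_single)

lemma sum_single_lookup: "(\<Sum>m\<in>Poly_Mapping.keys F. Poly_Mapping.single m (Poly_Mapping.lookup F m)) = F"
  by (rule poly_mapping_eqI) (simp add: lookup_sum lookup_single when_def in_keys_iff)

lemma lookup_single_mult_add:
  "Poly_Mapping.lookup (Poly_Mapping.single g c * F) (g + m) = c * Poly_Mapping.lookup F m"
  for F :: "('a::cancel_comm_monoid_add) \<Rightarrow>\<^sub>0 'b::comm_semiring_1"
proof -
  have "Poly_Mapping.single g c * F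
      = (\<Sum>m\<in>Poly_Mapping.keys F. Poly_Mapping.single (g + m) (c * Poly_Mapping.lookup F m))"
    by (subst sum_single_lookup[of F, symmetric]) (simp add: sum_distrib_left mult_single)
  then show ?thesis
    by (simp add: lookup_sum lookup_single when_def in_keys_iff)
qed

lemma finite_idx: "finite (idx k d)"
proof -
  have "idx k d \<subseteq> (\<lambda>f i. if i < k then f i else 0) ` (PiE {..<k} (\<lambda>i. {..d i}))"
  proof
    fix j assume j: "j \<in> idx k d"
    have "j = (\<lambda>i. if i < k then restrict j {..<k} i else 0)"
      using j by (auto simp: idx_def fun_eq_iff not_less)
    moreover have "restrict j {..<k} \<in> PiE {..<k} (\<lambda>i. {..d i})"
      using j by (auto simp: idx_def)
    ultimately show "j \<in> (\<lambda>f i. if i < k then f i else 0) ` (PiE {..<k} (\<lambda>i. {..d i}))"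
      by blast
  qed
  then show ?thesis
    by (rule finite_subset) (intro finite_imageI finite_PiE; simp)
qed

definition binomial_prod :: "nat \<Rightarrow> (nat \<Rightarrow> nat) \<Rightarrow> (nat \<Rightarrow> nat) \<Rightarrow> complex" where
  "binomial_prod k d j = (\<Prod>i<k. of_nat (d i choose j i))"

lemma binomial_prod_nonzero: "j \<in> idx k d \<Longrightarrow> binomial_prod k d j \<noteq> 0"
  by (auto simp: binomial_prod_def idx_def binomial_eq_0_iff)

lemma nu_pull_eq_sum_single:
  "nu_pull k d L = (\<Sum>j\<in>idx k d.
     Poly_Mapping.single (xy_monom k (\<lambda>i. d i - j i) j) (L j * binomial_prod k d j))"
proof -
  have "const_poly (of_nat (d i choose j i)) * Xv i ^ (d i - j i) * Yv i ^ (j i)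
     = Poly_Mapping.single
         (Poly_Mapping.single (2*i) (d i - j i) + Poly_Mapping.single (2*i+1) (j i))
         (of_nat (d i choose j i))" for i j
    unfolding Xv_def Yv_def single_single_power by (simp add: const_poly_mult_single mult_single)
  then show ?thesis
    unfolding nu_pull_def by (simp add: prod_single const_poly_mult_single xy_monom_def binomial_prod_def)
qed

lemma homog_eq_nu_pull:
  assumes H: "homog k d H"
  shows "H = nu_pull k d
    (\<lambda>j. Poly_Mapping.lookup H (xy_monom k (\<lambda>i. d i - j i) j) / binomial_prod k d j)"
    (is "H = nu_pull k d ?L")
proof (rule poly_mapping_eqI)
  fix m
  have "Poly_Mapping.lookup (nu_pull k d ?L) m =
     (\<Sum>j\<in>idx k d. if xy_monom k (\<lambda>i. d i - j i) j = m then Poly_Mapping.lookup H m else 0)"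
    unfolding nu_pull_eq_sum_single lookup_sum
    by (rule sum.cong) (auto simp: lookup_single when_def binomial_prod_nonzero)
  also have "\<dots> = Poly_Mapping.lookup H m"
  proof (cases "m \<in> Poly_Mapping.keys H")
    case False
    then show ?thesis by (simp add: in_keys_iff sum.neutral)
  next
    case True
    define j0 where "j0 = (\<lambda>i. if i < k then Poly_Mapping.lookup m (Suc (2*i)) else 0)"
    have keys_m: "\<forall>v\<in>Poly_Mapping.keys m. v < 2*k" and deg: "\<forall>i<k. mdeg m i = d i"
      using H True by (auto simp: homog_def Sring_def)
    have m_eq: "m = xy_monom k (\<lambda>i. d i - j0 i) j0"
      by (rule xy_monom_eqI[OF keys_m]) (use deg in \<open>auto simp: j0_def mdeg_def\<close>)
    have j0_idx: "j0 \<in> idx k d"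
      using deg by (auto simp: idx_def j0_def mdeg_def)
    have "xy_monom k (\<lambda>i. d i - j i) j = m \<longleftrightarrow> j = j0" if "j \<in> idx k d" for j
    proof
      assume "xy_monom k (\<lambda>i. d i - j i) j = m"
      then show "j = j0"
        using that xy_monom_inject(2)[of k _ j _ j0] m_eq
        by (auto simp: fun_eq_iff idx_def j0_def not_less)
    qed (use m_eq in simp)
    then have "(\<Sum>j\<in>idx k d. if xy_monom k (\<lambda>i. d i - j i) j = m then Poly_Mapping.lookup H m else 0)
        = (\<Sum>j\<in>idx k d. if j = j0 then Poly_Mapping.lookup H m else 0)"
      by (intro sum.cong) auto
    then show ?thesis
      using j0_idx finite_idx by simp
  qed
  finally show "Poly_Mapping.lookup H m = Poly_Mapping.lookup (nu_pull k d ?L) m" by simp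
qed

lemma lookup_T_monom_eq_0:
  assumes "homog k d H" "H \<in> I" "in_span_nu k d I (T_tensor k)" "\<forall>i<k. 1 \<le> d i"
  shows "Poly_Mapping.lookup H (xy_monom k (\<lambda>i. d i - 1) (\<lambda>_. 1)) = 0"
proof -
  define one where "one = (\<lambda>i::nat. if i < k then (1::nat) else 0)"
  define L where "L = (\<lambda>j. Poly_Mapping.lookup H (xy_monom k (\<lambda>i. d i - j i) j) / binomial_prod k d j)"
  have one_idx: "one \<in> idx k d"
    using assms(4) by (auto simp: idx_def one_def)
  have "nu_pull k d L \<in> I"
    using homog_eq_nu_pull[OF assms(1)] assms(2) by (simp add: L_def)
  then have "(\<Sum>j\<in>idx k d. L j * T_tensor k j) = 0"
    using assms(3) by (simp add: in_span_nu_def)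
  moreover have "(\<Sum>j\<in>idx k d. L j * T_tensor k j) = L one"
    using one_idx finite_idx by (simp add: T_tensor_def one_def if_distrib cong: if_cong)
  moreover have "xy_monom k (\<lambda>i. d i - one i) one = xy_monom k (\<lambda>i. d i - 1) (\<lambda>_. 1)"
    unfolding xy_monom_def one_def by (rule sum.cong) auto
  ultimately show ?thesis
    using binomial_prod_nonzero[OF one_idx] by (simp add: L_def)
qed

lemma homog_single_xy_monom_mult:
  assumes "homog k a F" "\<forall>i<k. b i = p i + q i + a i"
  shows "homog k b (Poly_Mapping.single (xy_monom k p q) c * F)"
proof -
  have "(\<forall>v\<in>Poly_Mapping.keys m'. v < 2*k) \<and> (\<forall>i<k. mdeg m' i = b i)"
    if m': "m' \<in> Poly_Mapping.keys (Poly_Mapping.single (xy_monom k p q) c * F)" for m'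
  proof -
    obtain m where m: "m \<in> Poly_Mapping.keys F" "m' = xy_monom k p q + m"
      using m' keys_mult[of "Poly_Mapping.single (xy_monom k p q) c" F] by (auto split: if_splits)
    have keys_m: "\<forall>v\<in>Poly_Mapping.keys m. v < 2*k" and deg_m: "\<forall>i<k. mdeg m i = a i"
      using assms(1) m(1) by (auto simp: homog_def Sring_def)
    show ?thesis
      using keys_add[of "xy_monom k p q" m] keys_m deg_m assms(2) m(2)
      by (auto simp: mdeg_def lookup_add lookup_xy_monom_x lookup_xy_monom_y dest: keys_xy_monom_less)
  qed
  then show ?thesis
    by (simp add: homog_def Sring_def)
qed

text \<open>The complementary monomial is x_i^(d_i - a_i - 1 + e_i) y_i^(1 - e_i), where e_i <= 1
  is the exponent of y_i in m.\<close>

lemma lookup_eq_0_if_y_exponents_le_1: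
  assumes "mh_ideal k I" "in_span_nu k d I (T_tensor k)" "\<forall>i<k. a i < d i"
    and F: "homog k a F" "F \<in> I"
    and y_le_1: "\<forall>i<k. Poly_Mapping.lookup m (Suc (2*i)) \<le> 1"
  shows "Poly_Mapping.lookup F m = 0"
proof (rule ccontr)
  assume "Poly_Mapping.lookup F m \<noteq> 0"
  then have keys_m: "\<forall>v\<in>Poly_Mapping.keys m. v < 2*k" and deg_m: "\<forall>i<k. mdeg m i = a i"
    using F(1) by (auto simp: homog_def Sring_def in_keys_iff)
  define e where "e i = Poly_Mapping.lookup m (Suc (2*i))" for i
  define g where "g = xy_monom k (\<lambda>i. d i - a i - (1 - e i)) (\<lambda>i. 1 - e i)"
  define H where "H = Poly_Mapping.single g 1 * F"
  have "Poly_Mapping.single g 1 \<in> Sring k"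
    by (auto simp: Sring_def g_def dest: keys_xy_monom_less)
  then have "H \<in> I"
    using assms(1) F(2) by (simp add: mh_ideal_def H_def)
  moreover have "homog k d H"
  proof -
    have "d i = (d i - a i - (1 - e i)) + (1 - e i) + a i" if "i < k" for i
      using assms(3)[rule_format, OF that] y_le_1[rule_format, OF that] by (simp add: e_def)
    then show ?thesis
      unfolding H_def g_def by (intro homog_single_xy_monom_mult[OF F(1)]) simp
  qed
  moreover have "g + m = xy_monom k (\<lambda>i. d i - 1) (\<lambda>_. 1)"
  proof (rule xy_monom_eqI)
    show "\<forall>v\<in>Poly_Mapping.keys (g + m). v < 2*k"
      using keys_add[of g m] keys_m by (auto simp: g_def dest: keys_xy_monom_less)
  next
    fix i assume i: "i < k"
    show "Poly_Mapping.lookup (g + m) (2*i) = d i - 1"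
      and "Poly_Mapping.lookup (g + m) (Suc (2*i)) = 1"
      using i assms(3)[rule_format, OF i] y_le_1[rule_format, OF i] deg_m[rule_format, OF i]
      by (auto simp: lookup_add g_def lookup_xy_monom_x lookup_xy_monom_y e_def mdeg_def)
  qed
  moreover have "\<forall>i<k. 1 \<le> d i"
    using assms(3) by force
  ultimately have "Poly_Mapping.lookup H (g + m) = 0"
    using lookup_T_monom_eq_0 assms(2) by simp
  then show False
    using \<open>Poly_Mapping.lookup F m \<noteq> 0\<close> by (simp add: H_def lookup_single_mult_add)
qed

lemma IZ_zero: "0 \<in> IZ k"
  unfolding IZ_def by (rule CollectI, rule exI[of _ "\<lambda>_. 0"]) (simp add: Sring_def)

lemma Sring_add: "F \<in> Sring k \<Longrightarrow> G \<in> Sring k \<Longrightarrow> F + G \<in> Sring k"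
  using keys_add[of F G] by (auto simp: Sring_def)

lemma IZ_add: "F \<in> IZ k \<Longrightarrow> G \<in> IZ k \<Longrightarrow> F + G \<in> IZ k"
proof -
  assume "F \<in> IZ k" "G \<in> IZ k"
  then obtain f g where f: "\<forall>i<k. f i \<in> Sring k" "F = (\<Sum>i<k. f i * Yv i ^ 2)"
    and g: "\<forall>i<k. g i \<in> Sring k" "G = (\<Sum>i<k. g i * Yv i ^ 2)"
    unfolding IZ_def by blast
  have "\<forall>i<k. f i + g i \<in> Sring k"
    using f(1) g(1) by (simp add: Sring_add)
  moreover have "F + G = (\<Sum>i<k. (f i + g i) * Yv i ^ 2)"
    unfolding f(2) g(2) by (simp add: sum.distrib distrib_right)
  ultimately show ?thesis
    unfolding IZ_def by (intro CollectI exI[of _ "\<lambda>i. f i + g i"]) simp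
qed

lemma IZ_sum: "finite A \<Longrightarrow> (\<forall>x\<in>A. f x \<in> IZ k) \<Longrightarrow> sum f A \<in> IZ k"
  by (induction A rule: finite_induct) (auto simp: IZ_zero IZ_add)

lemma single_in_IZ:
  assumes keys_m: "\<forall>v\<in>Poly_Mapping.keys m. v < 2*k" and "i < k"
    and y_ge_2: "2 \<le> Poly_Mapping.lookup m (Suc (2*i))"
  shows "Poly_Mapping.single m c \<in> IZ k"
proof -
  define m' where "m' = m - Poly_Mapping.single (Suc (2*i)) 2"
  have m_eq: "m = m' + Poly_Mapping.single (Suc (2*i)) 2"
    by (rule poly_mapping_eqI)
      (use y_ge_2 in \<open>auto simp: m'_def lookup_add lookup_minus lookup_single when_def\<close>)
  have "Poly_Mapping.keys m' \<subseteq> Poly_Mapping.keys m"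
    by (auto simp: m'_def in_keys_iff lookup_minus)
  then have m'_Sring: "Poly_Mapping.single m' c \<in> Sring k"
    using keys_m by (auto simp: Sring_def)
  define g where "g = (\<lambda>i'. if i' = i then Poly_Mapping.single m' c else 0)"
  have "(\<Sum>i'<k. g i' * Yv i' ^ 2) = (\<Sum>i'<k. if i' = i then Poly_Mapping.single m' c * Yv i ^ 2 else 0)"
    by (rule sum.cong) (auto simp: g_def)
  also have "\<dots> = Poly_Mapping.single m' c * Yv i ^ 2"
    using \<open>i < k\<close> by simp
  also have "\<dots> = Poly_Mapping.single m c"
    unfolding Yv_def single_single_power by (simp add: mult_single m_eq)
  finally have "Poly_Mapping.single m c = (\<Sum>i'<k. g i' * Yv i' ^ 2)" by simp
  moreover have "\<forall>i'<k. g i' \<in> Sring k"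
    using m'_Sring by (auto simp: g_def Sring_def)
  ultimately show ?thesis
    unfolding IZ_def by blast
qed

lemma in_IZ_if_keys_y_square:
  assumes "F \<in> Sring k" "\<forall>m\<in>Poly_Mapping.keys F. \<exists>i<k. 2 \<le> Poly_Mapping.lookup m (Suc (2*i))"
  shows "F \<in> IZ k"
proof -
  have "Poly_Mapping.single m (Poly_Mapping.lookup F m) \<in> IZ k" if "m \<in> Poly_Mapping.keys F" for m
    using assms that single_in_IZ by (fastforce simp: Sring_def)
  then have "(\<Sum>m\<in>Poly_Mapping.keys F. Poly_Mapping.single m (Poly_Mapping.lookup F m)) \<in> IZ k"
    by (simp add: IZ_sum)
  then show ?thesis
    by (simp add: sum_single_lookup)
qed

theorem lemma4p1:
  fixes k :: nat and d :: "nat \<Rightarrow> nat" and IA :: "cpoly set"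
  assumes "k \<ge> 1"
    and "\<forall>i<k. d i \<ge> 3"
    and "zero_dim_scheme_ideal k IA"
    and "in_span_nu k d IA (T_tensor k)"
  shows "\<forall>a :: nat \<Rightarrow> nat. (\<forall>i<k. a i \<le> d i - 1) \<longrightarrow>
           (\<forall>F. homog k a F \<and> F \<in> IA \<longrightarrow> F \<in> IZ k)"
proof (intro allI impI)
  fix a :: "nat \<Rightarrow> nat" and F
  assume a: "\<forall>i<k. a i \<le> d i - 1" and F: "homog k a F \<and> F \<in> IA"
  have ideal: "mh_ideal k IA"
    using assms(3) by (simp add: zero_dim_scheme_ideal_def)
  have a_less: "\<forall>i<k. a i < d i"
    using a assms(2) by force
  have y_square: "\<exists>i<k. 2 \<le> Poly_Mapping.lookup m (Suc (2*i))"
    if "m \<in> Poly_Mapping.keys F" for m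
  proof (rule ccontr)
    assume "\<not> (\<exists>i<k. 2 \<le> Poly_Mapping.lookup m (Suc (2*i)))"
    then have "\<forall>i<k. Poly_Mapping.lookup m (Suc (2*i)) \<le> 1"
      by auto
    then have "Poly_Mapping.lookup F m = 0"
      using lookup_eq_0_if_y_exponents_le_1 ideal assms(4) a_less F
      by blast
    with that show False
      by (simp add: in_keys_iff)
  qed
  show "F \<in> IZ k"
    using F y_square by (intro in_IZ_if_keys_y_square) (simp_all add: homog_def)
qed

end
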